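(* Let $k\ge0$ be an integer and $a,b,c,d\in\mathbb{C}$ generic (no lower parameter a nonpositive integer). Define the polynomial of degree $2k$ in $n$ $$Q_k^{(2)}(n;a;b,c,d)={}_4F_3\!\left[\begin{matrix}-n,\ n+a,\ -k,\ k-1-a+b+c+d\\ b,\ c,\ d\end{matrix}\,\Big|\,1\right]=\sum_{j=0}^k\frac{(-n)_j(n+a)_j(-k)_j(k-1-a+b+c+d)_j}{j!\,(b)_j(c)_j(d)_j}.$$ Then, near $x=0$, $${}_4F_3\!\left[\begin{matrix}\tfrac a2,\ \tfrac12+\tfrac a2,\ 1-k+a-b-c,\ k+d\\ 1+a-b,\ 1+a-c,\ d\end{matrix}\,\Big|\,-\frac{4x}{(1-x)^2}\right]=(1-x)^a\sum_{n=0}^\infty\frac{(a)_n(b)_n(c)_n}{n!\,(1+a-b)_n(1+a-c)_n}\,Q_k^{(2)}(n;a;b,c,d)\,x^n.$$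
   Context: $(c)_n$ denotes the Pochhammer symbol, $(c)_0=1$; ${}_pF_q$ is the generalized hypergeometric series $\sum_n\frac{\prod(a_i)_n}{n!\prod(b_i)_n}x^n$. *)

theory Defs
  imports "HOL-Analysis.Analysis"
begin

definition hyp_term :: "complex list \<Rightarrow> complex list \<Rightarrow> complex \<Rightarrow> nat \<Rightarrow> complex" where
  "hyp_term as bs z n =
     (prod_list (map (\<lambda>a. pochhammer a n) as) /
      (fact n * prod_list (map (\<lambda>b. pochhammer b n) bs))) * z ^ n"

definition hypergeom :: "complex list \<Rightarrow> complex list \<Rightarrow> complex \<Rightarrow> complex" where
  "hypergeom as bs z = (\<Sum>n. hyp_term as bs z n)"

definition Q2 :: "nat \<Rightarrow> complex \<Rightarrow> complex \<Rightarrow> complex \<Rightarrow> complex \<Rightarrow> complex \<Rightarrow> complex" where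
  "Q2 k n a b c d = (\<Sum>j\<le>k.
      pochhammer (-n) j * pochhammer (n + a) j * pochhammer (- of_nat k) j
        * pochhammer (of_nat k - 1 - a + b + c + d) j
      / (fact j * pochhammer b j * pochhammer c j * pochhammer d j))"

end

theory Submission
  imports Defs
begin

text \<open>Put \<open>z = -4 x / (1 - x)\<^sup>2\<close>. Then \<open>z\<^sup>m (1 - x)\<^sup>-\<^sup>a = (-4 x)\<^sup>m (1 - x)\<^sup>-\<^sup>a\<^sup>-\<^sup>2\<^sup>m\<close>, and
  expanding every \<open>(1 - x)\<^sup>-\<^sup>a\<^sup>-\<^sup>2\<^sup>m\<close> binomially turns \<open>(1 - x)\<^sup>-\<^sup>a\<close> times the \<open>\<^sub>4F\<^sub>3\<close>
  into a double series in \<open>x\<close>. Its coefficients grow at most geometrically, so for small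
  \<open>x\<close> it converges absolutely and may be summed along the diagonals. The coefficient of
  \<open>x\<^sup>n\<close> is then a finite double sum, which the duplication formula
  \<open>4\<^sup>m (a/2)\<^sub>m ((a+1)/2)\<^sub>m = (a)\<^sub>2\<^sub>m\<close> and two applications of the Pfaff--Saalschuetz
  summation reduce to the \<open>n\<close>-th coefficient of the right-hand side: the first splits the
  pair of parameters \<open>1 - k + a - b - c, k + d\<close>, the second evaluates the resulting
  alternating inner sums.\<close>

section \<open>Pfaff--Saalschuetz summations\<close>

lemma sum_atMost_triangle_swap:
  fixes g :: "nat \<Rightarrow> nat \<Rightarrow> 'a::comm_monoid_add"
  shows "(\<Sum>j\<le>N. \<Sum>i\<le>N - j. g j i) = (\<Sum>s\<le>N. \<Sum>j\<le>s. g j (s - j))"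
proof -
  have "(\<Sum>j\<le>N. \<Sum>i\<le>N - j. g j i) = (\<Sum>(j, i)\<in>{(j, i). j + i \<le> N}. g j i)"
    by (simp add: sum.Sigma) (rule sum.cong; auto)
  also have "\<dots> = (\<Sum>s\<le>N. \<Sum>j\<le>s. g j (s - j))"
    by (rule sum.triangle_reindex_eq)
  finally show ?thesis .
qed

lemma pochhammer_minus_of_nat:
  assumes "j \<le> n"
  shows "pochhammer (- of_nat n :: 'a::field_char_0) j = (-1) ^ j * fact n / fact (n - j)"
proof -
  have "fact n = (fact (n - j) :: 'a) * pochhammer (of_nat n - of_nat j + 1) j"
    using pochhammer_product[of "n - j" n "1::'a"] assms
    by (simp add: pochhammer_fact of_nat_diff add.commute)
  then show ?thesis
    by (simp add: pochhammer_minus field_simps)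
qed

lemma pochhammer_Vandermonde_shifted:
  fixes \<beta> y :: "'a::comm_ring_1"
  assumes "s \<le> N"
  shows "(\<Sum>j\<le>s. of_nat (s choose j) * pochhammer \<beta> j * pochhammer y (N - j))
       = pochhammer y (N - s) * pochhammer (\<beta> + y + of_nat (N - s)) s"
proof -
  have "(\<Sum>j\<le>s. of_nat (s choose j) * pochhammer \<beta> j * pochhammer y (N - j))
      = pochhammer y (N - s) * (\<Sum>j\<le>s. of_nat (s choose j) * pochhammer \<beta> j * pochhammer (y + of_nat (N - s)) (s - j))"
    unfolding sum_distrib_left
  proof (intro sum.cong refl)
    fix j assume "j \<in> {..s}"
    then have "pochhammer y (N - j) = pochhammer y (N - s) * pochhammer (y + of_nat (N - s)) (s - j)"
      using pochhammer_product'[of y "N - s" "s - j"] assms by (simp add: Nat.add_diff_assoc2)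
    then show "of_nat (s choose j) * pochhammer \<beta> j * pochhammer y (N - j)
        = pochhammer y (N - s) * (of_nat (s choose j) * pochhammer \<beta> j * pochhammer (y + of_nat (N - s)) (s - j))"
      by (simp add: mult_ac)
  qed
  also have "\<dots> = pochhammer y (N - s) * pochhammer (\<beta> + y + of_nat (N - s)) s"
    using pochhammer_binomial_sum[of \<beta> "y + of_nat (N - s)" s] by (simp add: add.assoc)
  finally show ?thesis .
qed

lemma pochhammer_Saalschuetz:
  fixes \<alpha> \<beta> y :: "'a::comm_ring_1"
  shows "(\<Sum>j\<le>N. of_nat (N choose j) * pochhammer \<alpha> j * pochhammer \<beta> j * pochhammer y (N - j)
            * pochhammer (\<alpha> + \<beta> + y + of_nat j) (N - j))
         = pochhammer (\<alpha> + y) N * pochhammer (\<beta> + y) N"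
proof -
  let ?P = pochhammer
  have "(\<Sum>j\<le>N. of_nat (N choose j) * ?P \<alpha> j * ?P \<beta> j * ?P y (N - j) * ?P (\<alpha> + \<beta> + y + of_nat j) (N - j))
      = (\<Sum>j\<le>N. \<Sum>i\<le>N - j. of_nat (N choose (j + i)) * of_nat ((j + i) choose j) * ?P \<alpha> (j + i)
            * ?P \<beta> j * ?P y (N - j) * ?P (\<beta> + y) (N - (j + i)))"
  proof (intro sum.cong refl)
    fix j assume j: "j \<in> {..N}"
    have "?P (\<alpha> + \<beta> + y + of_nat j) (N - j)
        = (\<Sum>i\<le>N - j. of_nat (N - j choose i) * ?P (\<alpha> + of_nat j) i * ?P (\<beta> + y) (N - j - i))"
      using pochhammer_binomial_sum[of "\<alpha> + of_nat j" "\<beta> + y" "N - j"] by (simp add: algebra_simps)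
    moreover have "of_nat (N choose (j + i)) * of_nat ((j + i) choose j) * ?P \<alpha> (j + i)
          * ?P \<beta> j * ?P y (N - j) * ?P (\<beta> + y) (N - (j + i))
        = of_nat (N choose j) * ?P \<alpha> j * ?P \<beta> j * ?P y (N - j)
          * (of_nat (N - j choose i) * ?P (\<alpha> + of_nat j) i * ?P (\<beta> + y) (N - j - i))"
      if "i \<le> N - j" for i
    proof -
      have "of_nat (N choose (j + i)) * of_nat ((j + i) choose j)
          = (of_nat (N choose j) * of_nat (N - j choose i) :: 'a)"
        using choose_mult[of j "j + i" N] that j by (simp flip: of_nat_mult)
      then show ?thesis
        by (simp add: pochhammer_product' mult_ac)
    qed
    ultimately show "of_nat (N choose j) * ?P \<alpha> j * ?P \<beta> j * ?P y (N - j) * ?P (\<alpha> + \<beta> + y + of_nat j) (N - j)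
        = (\<Sum>i\<le>N - j. of_nat (N choose (j + i)) * of_nat ((j + i) choose j) * ?P \<alpha> (j + i)
            * ?P \<beta> j * ?P y (N - j) * ?P (\<beta> + y) (N - (j + i)))"
      by (simp add: sum_distrib_left)
  qed
  also have "\<dots> = (\<Sum>s\<le>N. \<Sum>j\<le>s. of_nat (N choose s) * of_nat (s choose j) * ?P \<alpha> s
         * ?P \<beta> j * ?P y (N - j) * ?P (\<beta> + y) (N - s))"
    by (subst sum_atMost_triangle_swap) (intro sum.cong refl, simp)
  also have "\<dots> = (\<Sum>s\<le>N. of_nat (N choose s) * ?P \<alpha> s * ?P y (N - s) * ?P (\<beta> + y) N)"
  proof (intro sum.cong refl)
    fix s assume "s \<in> {..N}"
    then have split: "?P (\<beta> + y) N = ?P (\<beta> + y) (N - s) * ?P (\<beta> + y + of_nat (N - s)) s"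
      using pochhammer_product'[of "\<beta> + y" "N - s" s] by simp
    have "(\<Sum>j\<le>s. of_nat (N choose s) * of_nat (s choose j) * ?P \<alpha> s
         * ?P \<beta> j * ?P y (N - j) * ?P (\<beta> + y) (N - s))
        = of_nat (N choose s) * ?P \<alpha> s * ?P (\<beta> + y) (N - s)
          * (\<Sum>j\<le>s. of_nat (s choose j) * ?P \<beta> j * ?P y (N - j))"
      by (simp add: sum_distrib_left mult_ac)
    also have "\<dots> = of_nat (N choose s) * ?P \<alpha> s * ?P y (N - s) * ?P (\<beta> + y) N"
      using pochhammer_Vandermonde_shifted[of s N \<beta> y] \<open>s \<in> {..N}\<close> unfolding split by (simp add: mult_ac)
    finally show "(\<Sum>j\<le>s. of_nat (N choose s) * of_nat (s choose j) * ?P \<alpha> s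
         * ?P \<beta> j * ?P y (N - j) * ?P (\<beta> + y) (N - s))
        = of_nat (N choose s) * ?P \<alpha> s * ?P y (N - s) * ?P (\<beta> + y) N" .
  qed
  also have "\<dots> = ?P (\<alpha> + y) N * ?P (\<beta> + y) N"
    by (simp add: pochhammer_binomial_sum sum_distrib_right)
  finally show ?thesis .
qed

lemma pochhammer_reflected_tail:
  fixes \<delta> :: "'a::comm_ring_1"
  assumes "i \<le> N"
  shows "pochhammer \<delta> i * pochhammer (1 - \<delta> - of_nat N) (N - i) = (-1) ^ N * (-1) ^ i * pochhammer \<delta> N"
proof -
  have "pochhammer (1 - \<delta> - of_nat N) (N - i) = (-1) ^ (N - i) * pochhammer (\<delta> + of_nat i) (N - i)"
    using pochhammer_minus[of "\<delta> + of_nat N - 1" "N - i"] assms by (simp add: of_nat_diff algebra_simps)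
  moreover have "(-1) ^ (N - i) = ((-1) ^ N * (-1) ^ i :: 'a)"
    using assms by (metis (no_types) le_add_diff_inverse2 mult.assoc mult.right_neutral power_add
        power_minus1_even mult_2)
  ultimately show ?thesis
    using pochhammer_product[OF assms, of \<delta>] by (simp add: mult_ac)
qed

lemma pochhammer_Saalschuetz_alternating:
  fixes a b c :: "'a::field_char_0"
  assumes "pochhammer (1 + a - b) N \<noteq> 0" and "pochhammer (1 + a - c) N \<noteq> 0"
  shows "(\<Sum>i\<le>N. (-1) ^ i * pochhammer a (N + i) * pochhammer (1 + a - b - c) i
            / (fact i * fact (N - i) * pochhammer (1 + a - b) i * pochhammer (1 + a - c) i))
       = pochhammer a N * pochhammer b N * pochhammer c N
            / (fact N * pochhammer (1 + a - b) N * pochhammer (1 + a - c) N)"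
proof -
  let ?P = pochhammer
  define \<gamma> where "\<gamma> = 1 + a - b"
  define \<delta> where "\<delta> = 1 + a - c"
  define e where "e = 1 + a - b - c"
  define L where "L i = (-1) ^ i * ?P a (N + i) * ?P e i / (fact i * fact (N - i) * ?P \<gamma> i * ?P \<delta> i)" for i
  define K where "K = fact N * (-1) ^ N * ?P \<gamma> N * ?P \<delta> N"
  have summand: "?P a N * (of_nat (N choose i) * ?P (a + of_nat N) i * ?P e i * ?P (c - a - of_nat N) (N - i)
           * ?P ((a + of_nat N) + e + (c - a - of_nat N) + of_nat i) (N - i)) = K * L i" if i: "i \<le> N" for i
  proof -
    have \<gamma>i: "?P \<gamma> i \<noteq> 0" and \<delta>i: "?P \<delta> i \<noteq> 0"
      using assms i pochhammer_neq_0_mono unfolding \<gamma>_def \<delta>_def by blast+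
    have \<gamma>N: "?P \<gamma> N = ?P \<gamma> i * ?P (\<gamma> + of_nat i) (N - i)"
      using pochhammer_product[OF i] by blast
    have \<delta>i_shift: "?P \<delta> i * ?P (c - (a + of_nat N)) (N - i) = ?P \<delta> N * ((-1) ^ N * (-1) ^ i)"
      using pochhammer_reflected_tail[OF i, of \<delta>] by (simp add: \<delta>_def algebra_simps)
    have "(a + of_nat N) + e + (c - a - of_nat N) + of_nat i = \<gamma> + of_nat i"
      by (simp add: e_def \<gamma>_def)
    then show ?thesis
      unfolding L_def K_def using i \<gamma>i \<delta>i \<gamma>N \<delta>i_shift
      by (simp add: binomial_fact pochhammer_product' field_simps)
  qed
  have "?P a N * (?P c N * ?P (e + (c - a - of_nat N)) N)
      = ?P a N * (\<Sum>i\<le>N. of_nat (N choose i) * ?P (a + of_nat N) i * ?P e i * ?P (c - a - of_nat N) (N - i)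
           * ?P ((a + of_nat N) + e + (c - a - of_nat N) + of_nat i) (N - i))"
    using pochhammer_Saalschuetz[of N "a + of_nat N" e "c - a - of_nat N"] by simp
  also have "\<dots> = K * (\<Sum>i\<le>N. L i)"
    unfolding sum_distrib_left by (intro sum.cong refl) (use summand in auto)
  finally have "?P a N * (?P c N * ?P (e + (c - a - of_nat N)) N) = K * (\<Sum>i\<le>N. L i)" .
  moreover have "?P (e + (c - a - of_nat N)) N = (-1) ^ N * ?P b N"
    using pochhammer_minus[of "b + of_nat N - 1" N] by (simp add: e_def algebra_simps)
  moreover have "K \<noteq> 0"
    using assms by (simp add: K_def \<gamma>_def \<delta>_def)
  ultimately show ?thesis
    unfolding L_def K_def \<gamma>_def \<delta>_def e_def by (simp add: field_simps)
qed

lemma pochhammer_Saalschuetz_convolution: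
  fixes d e u :: "'a::field_char_0"
  assumes "pochhammer d m \<noteq> 0"
  shows "pochhammer (e - u) m * pochhammer (u + d) m / (fact m * pochhammer d m)
    = (\<Sum>j\<le>m. pochhammer (- u) j * pochhammer (u + d - e) j / (fact j * pochhammer d j)
         * (pochhammer e (m - j) / fact (m - j)))"
proof -
  let ?P = pochhammer
  have "of_nat (m choose j) * ?P (- u) j * ?P (u + d - e) j * ?P e (m - j) * ?P (- u + (u + d - e) + e + of_nat j) (m - j)
      = (fact m * ?P d m) * (?P (- u) j * ?P (u + d - e) j / (fact j * ?P d j) * (?P e (m - j) / fact (m - j)))"
    if j: "j \<le> m" for j
  proof -
    have "?P d j \<noteq> 0"
      using assms j pochhammer_neq_0_mono by blast
    moreover have "?P d m = ?P d j * ?P (d + of_nat j) (m - j)"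
      using pochhammer_product[OF j] by blast
    ultimately show ?thesis
      using j by (simp add: binomial_fact field_simps)
  qed
  then have "(fact m * ?P d m) * (\<Sum>j\<le>m. ?P (- u) j * ?P (u + d - e) j / (fact j * ?P d j) * (?P e (m - j) / fact (m - j)))
      = (\<Sum>j\<le>m. of_nat (m choose j) * ?P (- u) j * ?P (u + d - e) j * ?P e (m - j)
           * ?P (- u + (u + d - e) + e + of_nat j) (m - j))"
    unfolding sum_distrib_left by (intro sum.cong refl) auto
  also have "\<dots> = ?P (e - u) m * ?P (u + d) m"
    using pochhammer_Saalschuetz[of m "- u" "u + d - e" e] by simp
  finally show ?thesis
    using assms by (simp add: field_simps)
qed

lemma pochhammer_Saalschuetz_alternating_shifted:
  fixes a b c :: "'a::field_char_0"
  assumes "j \<le> n" and "pochhammer (1 + a - b) n \<noteq> 0" "pochhammer (1 + a - c) n \<noteq> 0"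
  shows "(\<Sum>i\<le>n - j. (-1) ^ (j + i) * pochhammer a (n + (j + i)) * pochhammer (1 + a - b - c) i
            / (fact i * fact (n - (j + i)) * pochhammer (1 + a - b) (j + i) * pochhammer (1 + a - c) (j + i)))
       = (-1) ^ j * pochhammer a (n + j) * pochhammer (b + of_nat j) (n - j) * pochhammer (c + of_nat j) (n - j)
            / (fact (n - j) * pochhammer (1 + a - b) n * pochhammer (1 + a - c) n)"
proof -
  let ?P = pochhammer
  define N where "N = n - j"
  define \<gamma> where "\<gamma> = 1 + a - b"
  define \<delta> where "\<delta> = 1 + a - c"
  define a' where "a' = a + 2 * of_nat j"
  have n: "n = j + N"
    using assms(1) by (simp add: N_def)
  have a': "?P a (2 * j + p) = ?P a (2 * j) * ?P a' p" for p
    using pochhammer_product'[of a "2 * j" p] by (simp add: a'_def)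
  have \<gamma>: "?P \<gamma> (j + p) = ?P \<gamma> j * ?P (\<gamma> + of_nat j) p" and \<delta>: "?P \<delta> (j + p) = ?P \<delta> j * ?P (\<delta> + of_nat j) p" for p
    by (rule pochhammer_product')+
  have "?P \<gamma> (j + N) \<noteq> 0" "?P \<delta> (j + N) \<noteq> 0"
    using assms(2,3) by (simp_all add: n \<gamma>_def \<delta>_def)
  then have nz: "?P \<gamma> j \<noteq> 0" "?P \<delta> j \<noteq> 0" "?P (\<gamma> + of_nat j) N \<noteq> 0" "?P (\<delta> + of_nat j) N \<noteq> 0"
    by (simp_all add: \<gamma> \<delta>)
  have params: "1 + a' - (b + of_nat j) = \<gamma> + of_nat j" "1 + a' - (c + of_nat j) = \<delta> + of_nat j"
      "1 + a' - (b + of_nat j) - (c + of_nat j) = 1 + a - b - c"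
    by (simp_all add: a'_def \<gamma>_def \<delta>_def)
  have "(-1) ^ (j + i) * ?P a (j + N + (j + i)) * ?P (1 + a - b - c) i
            / (fact i * fact (j + N - (j + i)) * ?P \<gamma> (j + i) * ?P \<delta> (j + i))
      = (-1) ^ j * ?P a (2 * j) / (?P \<gamma> j * ?P \<delta> j)
        * ((-1) ^ i * ?P a' (N + i) * ?P (1 + a - b - c) i
            / (fact i * fact (N - i) * ?P (\<gamma> + of_nat j) i * ?P (\<delta> + of_nat j) i))" if "i \<le> N" for i
  proof -
    have "?P (\<gamma> + of_nat j) i \<noteq> 0" "?P (\<delta> + of_nat j) i \<noteq> 0"
      using nz(3,4) that pochhammer_neq_0_mono by blast+
    moreover have "?P a (j + N + (j + i)) = ?P a (2 * j) * ?P a' (N + i)"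
      using a'[of "N + i"] by (simp add: mult_2 add_ac)
    ultimately show ?thesis
      unfolding \<gamma> \<delta> using nz(1,2) by (simp add: power_add field_simps)
  qed
  then have "(\<Sum>i\<le>N. (-1) ^ (j + i) * ?P a (j + N + (j + i)) * ?P (1 + a - b - c) i
            / (fact i * fact (j + N - (j + i)) * ?P \<gamma> (j + i) * ?P \<delta> (j + i)))
      = (-1) ^ j * ?P a (2 * j) / (?P \<gamma> j * ?P \<delta> j)
        * (\<Sum>i\<le>N. (-1) ^ i * ?P a' (N + i) * ?P (1 + a - b - c) i
            / (fact i * fact (N - i) * ?P (\<gamma> + of_nat j) i * ?P (\<delta> + of_nat j) i))"
    unfolding sum_distrib_left by (intro sum.cong refl) auto
  also have "\<dots> = (-1) ^ j * ?P a (2 * j) / (?P \<gamma> j * ?P \<delta> j)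
        * (?P a' N * ?P (b + of_nat j) N * ?P (c + of_nat j) N
            / (fact N * ?P (\<gamma> + of_nat j) N * ?P (\<delta> + of_nat j) N))"
    using pochhammer_Saalschuetz_alternating[of a' "b + of_nat j" N "c + of_nat j",
        unfolded params(3), unfolded params(1,2)] nz(3,4)
    by simp
  also have "\<dots> = (-1) ^ j * ?P a (j + N + j) * ?P (b + of_nat j) N * ?P (c + of_nat j) N
            / (fact N * ?P \<gamma> (j + N) * ?P \<delta> (j + N))"
  proof -
    have "?P a (j + N + j) = ?P a (2 * j) * ?P a' N"
      using a'[of N] by (simp add: mult_2 add_ac)
    then show ?thesis
      unfolding \<gamma> \<delta> using nz by (simp add: field_simps)
  qed
  finally show ?thesis
    by (simp add: n \<gamma>_def \<delta>_def add_ac)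
qed

section \<open>The coefficients of the transformed series\<close>

definition hyp_coeff :: "complex list \<Rightarrow> complex list \<Rightarrow> nat \<Rightarrow> complex" where
  "hyp_coeff as bs n =
     prod_list (map (\<lambda>a. pochhammer a n) as) / (fact n * prod_list (map (\<lambda>b. pochhammer b n) bs))"

lemma hyp_term_eq: "hyp_term as bs z = (\<lambda>n. hyp_coeff as bs n * z ^ n)"
  by (simp add: hyp_term_def hyp_coeff_def fun_eq_iff)

text \<open>The coefficient of \<open>x ^ n\<close> in \<open>\<Sum>m. A m * (-4 * x / (1 - x)\<^sup>2) ^ m * (1 - x) powr - a\<close>
  once each \<open>(1 - x) powr (- a - 2 * m)\<close> is expanded binomially.\<close>
definition quadratic_transform_coeff :: "(nat \<Rightarrow> complex) \<Rightarrow> complex \<Rightarrow> nat \<Rightarrow> complex" where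
  "quadratic_transform_coeff A a n =
     (\<Sum>m\<le>n. A m * (-4) ^ m * pochhammer (a + 2 * of_nat m) (n - m) / fact (n - m))"

lemma quadratic_transform_summand:
  fixes a d e u \<gamma> \<delta> :: complex
  assumes "m \<le> n" and "pochhammer \<gamma> m \<noteq> 0" "pochhammer \<delta> m \<noteq> 0" "pochhammer d m \<noteq> 0"
  shows "hyp_coeff [a / 2, 1 / 2 + a / 2, e - u, u + d] [\<gamma>, \<delta>, d] m * (-4) ^ m
           * pochhammer (a + 2 * of_nat m) (n - m) / fact (n - m)
       = (\<Sum>j\<le>m. (-1) ^ m * pochhammer a (n + m) / (fact (n - m) * pochhammer \<gamma> m * pochhammer \<delta> m)
           * (pochhammer (- u) j * pochhammer (u + d - e) j / (fact j * pochhammer d j)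
              * (pochhammer e (m - j) / fact (m - j))))"
proof -
  let ?P = pochhammer
  have "(-4) ^ m * ?P (a / 2) m * ?P (1 / 2 + a / 2) m = (-1) ^ m * ?P a (2 * m)"
    using pochhammer_double[of "a / 2" m]
    by (simp add: add.commute power_mult power_mult_distrib[symmetric])
  moreover have "?P a (2 * m) * ?P (a + 2 * of_nat m) (n - m) = ?P a (n + m)"
    using pochhammer_product'[of a "2 * m" "n - m"] assms(1) by (simp add: add.commute)
  ultimately have "hyp_coeff [a / 2, 1 / 2 + a / 2, e - u, u + d] [\<gamma>, \<delta>, d] m * (-4) ^ m
           * ?P (a + 2 * of_nat m) (n - m) / fact (n - m)
       = (-1) ^ m * ?P a (n + m) / (fact (n - m) * ?P \<gamma> m * ?P \<delta> m)
           * (?P (e - u) m * ?P (u + d) m / (fact m * ?P d m))"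
    using assms(2-) by (simp add: hyp_coeff_def field_simps)
  then show ?thesis
    by (simp add: pochhammer_Saalschuetz_convolution[OF assms(4)] sum_distrib_left)
qed

lemma quadratic_transform_coeff_Q2:
  fixes a b c d :: complex and k n :: nat
  assumes "\<And>m. pochhammer b m \<noteq> 0" "\<And>m. pochhammer c m \<noteq> 0" "\<And>m. pochhammer d m \<noteq> 0"
    and "\<And>m. pochhammer (1 + a - b) m \<noteq> 0" "\<And>m. pochhammer (1 + a - c) m \<noteq> 0"
  shows "quadratic_transform_coeff
           (hyp_coeff [a / 2, 1 / 2 + a / 2, 1 - of_nat k + a - b - c, of_nat k + d] [1 + a - b, 1 + a - c, d]) a n
       = pochhammer a n * pochhammer b n * pochhammer c n
           / (fact n * pochhammer (1 + a - b) n * pochhammer (1 + a - c) n) * Q2 k (of_nat n) a b c d"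
proof -
  let ?P = pochhammer
  define \<gamma> where "\<gamma> = 1 + a - b"
  define \<delta> where "\<delta> = 1 + a - c"
  define e where "e = 1 + a - b - c"
  define cc where "cc j = ?P (- of_nat k) j * ?P (of_nat k + d - e) j / (fact j * ?P d j)" for j
  define h where "h m j = (-1) ^ m * ?P a (n + m) / (fact (n - m) * ?P \<gamma> m * ?P \<delta> m)
      * (cc j * (?P e (m - j) / fact (m - j)))" for m j
  define F where "F j = ?P a n * ?P b n * ?P c n / (fact n * ?P \<gamma> n * ?P \<delta> n)
      * (?P (- of_nat n) j * ?P (of_nat n + a) j * ?P (- of_nat k) j * ?P (of_nat k - 1 - a + b + c + d) j
         / (fact j * ?P b j * ?P c j * ?P d j))" for j
  have ek: "1 - of_nat k + a - b - c = e - of_nat k"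
    by (simp add: e_def)
  have "quadratic_transform_coeff
           (hyp_coeff [a / 2, 1 / 2 + a / 2, 1 - of_nat k + a - b - c, of_nat k + d] [\<gamma>, \<delta>, d]) a n
      = (\<Sum>m\<le>n. \<Sum>j\<le>m. h m j)"
    unfolding ek quadratic_transform_coeff_def h_def cc_def
    by (intro sum.cong refl quadratic_transform_summand) (auto simp: assms \<gamma>_def \<delta>_def)
  also have "\<dots> = (\<Sum>j\<le>n. \<Sum>i\<le>n - j. h (j + i) j)"
    using sum_atMost_triangle_swap[of "\<lambda>j i. h (j + i) j" n] by simp
  also have "\<dots> = (\<Sum>j\<le>n. cc j * (\<Sum>i\<le>n - j. (-1) ^ (j + i) * ?P a (n + (j + i)) * ?P e i
            / (fact i * fact (n - (j + i)) * ?P \<gamma> (j + i) * ?P \<delta> (j + i))))"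
    unfolding sum_distrib_left h_def by (intro sum.cong refl) (simp add: field_simps)
  also have "\<dots> = (\<Sum>j\<le>n. F j)"
  proof (intro sum.cong refl)
    fix j assume "j \<in> {..n}"
    then have j: "j \<le> n" by simp
    have "?P a n * ?P (of_nat n + a) j = ?P a (n + j)"
      using pochhammer_product'[of a n j] by (simp add: add.commute)
    moreover have "?P b n = ?P b j * ?P (b + of_nat j) (n - j)" "?P c n = ?P c j * ?P (c + of_nat j) (n - j)"
      using pochhammer_product[OF j] by blast+
    moreover have "of_nat k - 1 - a + b + c + d = of_nat k + d - e"
      by (simp add: e_def)
    ultimately show "cc j * (\<Sum>i\<le>n - j. (-1) ^ (j + i) * ?P a (n + (j + i)) * ?P e i
            / (fact i * fact (n - (j + i)) * ?P \<gamma> (j + i) * ?P \<delta> (j + i))) = F j"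
      using pochhammer_Saalschuetz_alternating_shifted[OF j, of a b c] assms
      by (simp add: F_def cc_def e_def \<gamma>_def \<delta>_def pochhammer_minus_of_nat[OF j] field_simps)
  qed
  also have "\<dots> = (\<Sum>j\<le>k. F j)" \<comment> \<open>\<open>(-n)\<^sub>j\<close> vanishes for \<open>j > n\<close>, and \<open>(-k)\<^sub>j\<close> for \<open>j > k\<close>\<close>
    by (intro sum.mono_neutral_cong) (auto simp: F_def pochhammer_of_nat_eq_0_lemma not_le)
  also have "\<dots> = ?P a n * ?P b n * ?P c n / (fact n * ?P \<gamma> n * ?P \<delta> n) * Q2 k (of_nat n) a b c d"
    by (simp add: F_def Q2_def sum_distrib_left)
  finally show ?thesis
    by (simp add: \<gamma>_def \<delta>_def)
qed

section \<open>Geometric growth of hypergeometric coefficients\<close>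

lemma norm_pochhammer_le:
  fixes w :: "'a::real_normed_field"
  assumes "norm w \<le> s"
  shows "norm (pochhammer w p) \<le> pochhammer s p"
proof (induction p)
  case (Suc p)
  have "norm (w + of_nat p) \<le> s + of_nat p"
    using norm_triangle_ineq[of w "of_nat p"] assms by (simp add: norm_of_nat)
  moreover have "0 \<le> pochhammer s p"
    using order_trans[OF norm_ge_zero assms] by (induction p) (auto simp: pochhammer_Suc)
  ultimately have "norm (pochhammer w p) * norm (w + of_nat p) \<le> pochhammer s p * (s + of_nat p)"
    using Suc by (intro mult_mono) auto
  then show ?case
    by (simp add: pochhammer_Suc norm_mult)
qed simp

lemma pochhammer_le_power_fact:
  fixes s :: real
  assumes "0 \<le> s"
  shows "pochhammer s m \<le> (s + 1) ^ m * fact m"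
proof (induction m)
  case (Suc m)
  have "pochhammer s m * (s + of_nat m) \<le> ((s + 1) ^ m * fact m) * ((s + 1) * (of_nat m + 1))"
    using Suc assms by (intro mult_mono) (auto simp: algebra_simps)
  then show ?case
    by (simp add: pochhammer_Suc algebra_simps)
qed simp

lemma norm_pochhammer_le_power_fact:
  fixes u :: "'a::real_normed_field"
  shows "norm (pochhammer u m) \<le> (norm u + 1) ^ m * fact m"
  using norm_pochhammer_le[of u "norm u" m] pochhammer_le_power_fact[of "norm u" m] by simp

lemma norm_add_of_nat_ge_linear:
  fixes l :: complex
  assumes "\<forall>n::nat. l \<noteq> - of_nat n"
  obtains \<delta> where "\<delta> > 0" "\<And>i::nat. \<delta> * (of_nat i + 1) \<le> norm (l + of_nat i)"
proof -
  define M where "M = nat \<lceil>2 * norm l\<rceil> + 1"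
  define S where "S = (\<lambda>i::nat. norm (l + of_nat i) / (of_nat i + 1)) ` {..<M}"
  have S: "finite S" "S \<noteq> {}"
    by (auto simp: S_def M_def)
  have "l + of_nat i \<noteq> 0" for i
    using assms[rule_format, of i] by (auto simp: add_eq_0_iff)
  then have "s > 0" if "s \<in> S" for s
    using that by (auto simp: S_def)
  then have \<delta>: "min (1/4) (Min S) > 0"
    using S by auto
  have "min (1/4) (Min S) * (of_nat i + 1) \<le> norm (l + of_nat i)" for i
  proof (cases "i < M")
    case True
    then have "Min S \<le> norm (l + of_nat i) / (of_nat i + 1)"
      using S by (intro Min_le) (auto simp: S_def)
    then have "min (1/4) (Min S) \<le> norm (l + of_nat i) / (of_nat i + 1)"
      by linarith
    then show ?thesis
      by (simp add: pos_le_divide_eq)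
  next
    case False
    then have "real i \<ge> 2 * norm l" "real i \<ge> 1"
      unfolding M_def by linarith+
    moreover have "real i - norm l \<le> norm (l + of_nat i)"
      using norm_triangle_ineq4[of "l + of_nat i" l] by simp
    moreover have "min (1/4) (Min S) * (of_nat i + 1) \<le> (1/4) * (of_nat i + 1)"
      by (intro mult_right_mono) auto
    ultimately show ?thesis
      by (simp add: field_simps)
  qed
  with \<delta> that show ?thesis
    by blast
qed

lemma norm_pochhammer_ge_power_fact:
  fixes l :: complex
  assumes "\<forall>n::nat. l \<noteq> - of_nat n"
  obtains \<delta> where "\<delta> > 0" "\<And>m. \<delta> ^ m * fact m \<le> norm (pochhammer l m)"
proof -
  obtain \<delta> where \<delta>: "\<delta> > 0" "\<And>i::nat. \<delta> * (of_nat i + 1) \<le> norm (l + of_nat i)"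
    using norm_add_of_nat_ge_linear[OF assms] by blast
  have "\<delta> ^ m * fact m \<le> norm (pochhammer l m)" for m
  proof (induction m)
    case (Suc m)
    have "\<delta> ^ Suc m * fact (Suc m) = (\<delta> ^ m * fact m) * (\<delta> * (of_nat m + 1))"
      by (simp add: algebra_simps)
    also have "\<dots> \<le> norm (pochhammer l m) * norm (l + of_nat m)"
      using Suc \<delta> by (intro mult_mono) auto
    also have "\<dots> = norm (pochhammer l (Suc m))"
      by (simp add: pochhammer_Suc norm_mult)
    finally show ?case .
  qed simp
  with \<delta> that show ?thesis
    by blast
qed

lemma norm_prod_pochhammer_le:
  fixes as :: "'a::real_normed_field list"
  shows "norm (prod_list (map (\<lambda>a. pochhammer a n) as))
           \<le> prod_list (map (\<lambda>a. norm a + 1) as) ^ n * fact n ^ length as"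
proof (induction as)
  case (Cons a as)
  have "norm (pochhammer a n) * norm (prod_list (map (\<lambda>a. pochhammer a n) as))
      \<le> ((norm a + 1) ^ n * fact n) * (prod_list (map (\<lambda>a. norm a + 1) as) ^ n * fact n ^ length as)"
    using Cons norm_pochhammer_le_power_fact by (intro mult_mono) auto
  then show ?case
    by (simp add: norm_mult power_mult_distrib mult_ac)
qed simp

lemma norm_prod_pochhammer_ge:
  fixes bs :: "complex list"
  assumes "\<forall>b\<in>set bs. \<forall>m::nat. b \<noteq> - of_nat m"
  obtains \<delta> where "\<delta> > 0" "\<And>n. \<delta> ^ n * fact n ^ length bs \<le> norm (prod_list (map (\<lambda>b. pochhammer b n) bs))"
  using assms
proof (induction bs arbitrary: thesis)
  case Nil
  show ?case
    by (rule Nil(1)[of 1]) auto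
next
  case (Cons b bs)
  obtain \<delta>\<^sub>1 where \<delta>\<^sub>1: "\<delta>\<^sub>1 > 0" "\<And>n. \<delta>\<^sub>1 ^ n * fact n \<le> norm (pochhammer b n)"
    using norm_pochhammer_ge_power_fact Cons.prems(2) by auto
  obtain \<delta>\<^sub>2 where \<delta>\<^sub>2: "\<delta>\<^sub>2 > 0"
    "\<And>n. \<delta>\<^sub>2 ^ n * fact n ^ length bs \<le> norm (prod_list (map (\<lambda>b. pochhammer b n) bs))"
    using Cons.IH Cons.prems(2) by auto
  have "(\<delta>\<^sub>1 * \<delta>\<^sub>2) ^ n * fact n ^ length (b # bs)
      = (\<delta>\<^sub>1 ^ n * fact n) * (\<delta>\<^sub>2 ^ n * fact n ^ length bs)" for n
    by (simp add: power_mult_distrib mult_ac)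
  also have "\<dots> n \<le> norm (prod_list (map (\<lambda>b. pochhammer b n) (b # bs)))" for n
    using \<delta>\<^sub>1 \<delta>\<^sub>2 by (simp add: norm_mult mult_mono)
  finally show ?case
    using Cons.prems(1) \<delta>\<^sub>1(1) \<delta>\<^sub>2(1) by (metis mult_pos_pos)
qed

lemma hyp_coeff_geometric_bound:
  assumes "length as \<le> Suc (length bs)" and "\<forall>b\<in>set bs. \<forall>m::nat. b \<noteq> - of_nat m"
  obtains K where "K > 0" "\<And>n. norm (hyp_coeff as bs n) \<le> K ^ n"
proof -
  define C where "C = prod_list (map (\<lambda>a. norm a + 1) as)"
  obtain \<delta> where \<delta>: "\<delta> > 0" "\<And>n. \<delta> ^ n * fact n ^ length bs \<le> norm (prod_list (map (\<lambda>b. pochhammer b n) bs))"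
    using norm_prod_pochhammer_ge[OF assms(2)] by blast
  have C: "C > 0"
    unfolding C_def by (induction as) (auto intro!: mult_pos_pos add_nonneg_pos)
  have "norm (hyp_coeff as bs n) \<le> (C / \<delta>) ^ n" for n
  proof -
    have "norm (hyp_coeff as bs n) \<le> C ^ n * fact n ^ length as / (fact n * (\<delta> ^ n * fact n ^ length bs))"
      unfolding hyp_coeff_def norm_divide norm_mult
      using C \<delta> norm_prod_pochhammer_le[of n as, folded C_def] by (intro frac_le mult_left_mono) auto
    also have "\<dots> = C ^ n * fact n ^ length as / (\<delta> ^ n * fact n ^ Suc (length bs))"
      by (simp add: mult_ac)
    also have "\<dots> \<le> C ^ n * fact n ^ Suc (length bs) / (\<delta> ^ n * fact n ^ Suc (length bs))"
      using C \<delta>(1) assms(1) by (intro divide_right_mono mult_left_mono power_increasing) auto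
    also have "\<dots> = (C / \<delta>) ^ n"
      by (simp add: power_divide)
    finally show ?thesis .
  qed
  with C \<delta>(1) that show ?thesis
    by (meson divide_pos_pos)
qed

section \<open>Summing the transformed series along diagonals\<close>

lemma pochhammer_binomial_series_real:
  fixes s t :: real
  assumes "\<bar>t\<bar> < 1"
  shows "(\<lambda>p. pochhammer s p / fact p * t ^ p) sums (1 - t) powr (- s)"
proof -
  have "((- s) gchoose p) * (- t) ^ p = pochhammer s p / fact p * t ^ p" for p
    by (simp add: gbinomial_pochhammer power_mult_distrib[symmetric] flip: power_mult_distrib)
  then show ?thesis
    using gen_binomial_real[of "- t" "- s"] assms by simp
qed

lemma pochhammer_binomial_series_complex:
  fixes w x :: complex
  assumes "norm x < 1"
  shows "(\<lambda>p. pochhammer w p / fact p * x ^ p) sums (1 - x) powr (- w)"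
proof -
  have "((- w) gchoose p) * (- x) ^ p = pochhammer w p / fact p * x ^ p" for p
    by (simp add: gbinomial_pochhammer power_mult_distrib[symmetric] flip: power_mult_distrib)
  then show ?thesis
    using gen_binomial_complex[of "- x" "- w"] assms by simp
qed

lemma norm_pochhammer_binomial_series_le:
  fixes w x :: complex
  assumes "norm x < 1" and "norm w \<le> s"
  shows "summable (\<lambda>p. norm (pochhammer w p / fact p * x ^ p))"
    and "(\<Sum>p. norm (pochhammer w p / fact p * x ^ p)) \<le> (1 - norm x) powr (- s)"
proof -
  have le: "norm (pochhammer w p / fact p * x ^ p) \<le> pochhammer s p / fact p * norm x ^ p" for p
    using norm_pochhammer_le[OF assms(2), of p]
    by (simp add: norm_mult norm_divide norm_power divide_right_mono mult_right_mono)
  have sums: "(\<lambda>p. pochhammer s p / fact p * norm x ^ p) sums (1 - norm x) powr (- s)"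
    using assms(1) by (intro pochhammer_binomial_series_real) simp
  show "summable (\<lambda>p. norm (pochhammer w p / fact p * x ^ p))"
    using le sums by (intro summable_comparison_test[OF _ sums_summable[OF sums]]) auto
  then show "(\<Sum>p. norm (pochhammer w p / fact p * x ^ p)) \<le> (1 - norm x) powr (- s)"
    using suminf_le[OF le _ sums_summable[OF sums]] sums_unique[OF sums] by simp
qed

lemma sums_diagonal_reindex:
  fixes F :: "nat \<Rightarrow> nat \<Rightarrow> 'a::banach"
  assumes rows: "\<And>m. summable (\<lambda>p. norm (F m p))"
    and cols: "summable (\<lambda>m. \<Sum>p. norm (F m p))"
  obtains S where "(\<lambda>m. \<Sum>p. F m p) sums S" and "(\<lambda>n. \<Sum>m\<le>n. F m (n - m)) sums S"
proof -
  have norm_rows: "((\<lambda>p. norm (F m p)) has_sum (\<Sum>p. norm (F m p))) UNIV" for m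
    using rows[of m] by (intro sums_nonneg_imp_has_sum summable_sums) simp_all
  have "(\<lambda>m. \<Sum>p. norm (F m p)) summable_on UNIV"
    using cols by (rule summable_nonneg_imp_summable_on) (simp add: suminf_nonneg rows)
  then have "(\<lambda>q. norm ((\<lambda>(m, p). F m p) q)) summable_on UNIV \<times> UNIV"
    using norm_rows by (intro summable_on_SigmaI[where g = "\<lambda>m. \<Sum>p. norm (F m p)"]) auto
  then have "(\<lambda>(m, p). F m p) summable_on UNIV \<times> UNIV"
    by (rule abs_summable_summable)
  then obtain S where S: "((\<lambda>(m, p). F m p) has_sum S) (UNIV \<times> UNIV)"
    using has_sum_infsum by blast
  have "(F m has_sum (\<Sum>p. F m p)) UNIV" for m
    using rows[of m] summable_norm_cancel[OF rows[of m]] by (intro norm_summable_imp_has_sum summable_sums)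
  then have "((\<lambda>m. \<Sum>p. F m p) has_sum S) UNIV"
    by (intro has_sum_SigmaD[OF S]) auto
  moreover have "((\<lambda>(m, p). F m p) has_sum S) (UNIV \<times> UNIV)
      \<longleftrightarrow> ((\<lambda>(n, m). F m (n - m)) has_sum S) (SIGMA n:UNIV. {..n})"
    by (rule has_sum_reindex_bij_witness[where j = "\<lambda>(m, p). (m + p, m)" and i = "\<lambda>(n, m). (m, n - m)"]) auto
  with S have "((\<lambda>(n, m). F m (n - m)) has_sum S) (SIGMA n:UNIV. {..n})"
    by blast
  then have "((\<lambda>n. \<Sum>m\<le>n. F m (n - m)) has_sum S) UNIV"
    by (rule has_sum_SigmaD) (simp add: has_sum_finite)
  ultimately show ?thesis
    using that has_sum_imp_sums by blast
qed

lemma sums_quadratic_transform_row: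
  fixes a x :: complex
  assumes "norm x < 1"
  shows "(\<lambda>p. (-4) ^ m * x ^ m * (pochhammer (a + 2 * of_nat m) p / fact p * x ^ p))
           sums ((-4 * x / (1 - x)\<^sup>2) ^ m * (1 - x) powr (- a))"
proof -
  have "1 - x \<noteq> 0"
    using assms by auto
  then have "(1 - x) powr (of_nat (2 * m)) = (1 - x) ^ (2 * m)"
    by (rule powr_nat'[OF disjI1])
  then have "(1 - x) powr (- (a + 2 * of_nat m)) = (1 - x) powr (- a) / ((1 - x)\<^sup>2) ^ m"
    by (simp add: powr_diff power_mult flip: diff_conv_add_uminus)
  moreover have "(-4 * x / (1 - x)\<^sup>2) ^ m = (-4) ^ m * x ^ m / ((1 - x)\<^sup>2) ^ m"
    by (simp only: power_divide power_mult_distrib)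
  ultimately have eq: "(-4) ^ m * x ^ m * (1 - x) powr (- (a + 2 * of_nat m))
      = (-4 * x / (1 - x)\<^sup>2) ^ m * (1 - x) powr (- a)"
    by simp
  show ?thesis
    using sums_mult[OF pochhammer_binomial_series_complex[OF assms, of "a + 2 * of_nat m"], of "(-4) ^ m * x ^ m"]
    unfolding eq .
qed

lemma norm_quadratic_transform_row_le:
  fixes a x :: complex
  assumes "norm x < 1"
  shows "summable (\<lambda>p. norm (pochhammer (a + 2 * of_nat m) p / fact p * x ^ p))"
    and "(\<Sum>p. norm (pochhammer (a + 2 * of_nat m) p / fact p * x ^ p))
           \<le> (1 - norm x) powr (- norm a) / ((1 - norm x)\<^sup>2) ^ m"
proof -
  have norm_a: "norm (a + 2 * of_nat m) \<le> norm a + 2 * of_nat m"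
    using norm_triangle_ineq[of a "2 * of_nat m"] by simp
  then show "summable (\<lambda>p. norm (pochhammer (a + 2 * of_nat m) p / fact p * x ^ p))"
    by (rule norm_pochhammer_binomial_series_le(1)[OF assms])
  have "(1 - norm x) powr (real (2 * m)) = (1 - norm x) ^ (2 * m)"
    using assms by (intro powr_realpow) auto
  then have "(1 - norm x) powr (- (norm a + 2 * of_nat m)) = (1 - norm x) powr (- norm a) / ((1 - norm x)\<^sup>2) ^ m"
    by (simp add: powr_diff power_mult flip: diff_conv_add_uminus)
  then show "(\<Sum>p. norm (pochhammer (a + 2 * of_nat m) p / fact p * x ^ p))
      \<le> (1 - norm x) powr (- norm a) / ((1 - norm x)\<^sup>2) ^ m"
    using norm_pochhammer_binomial_series_le(2)[OF assms norm_a] by simp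
qed

lemma quadratic_ratio_le_half:
  fixes K t :: real
  assumes "0 \<le> K" "0 \<le> t" "t < 1/2" "32 * K * t \<le> 1"
  shows "0 \<le> K * (4 * t / (1 - t)\<^sup>2)" and "K * (4 * t / (1 - t)\<^sup>2) \<le> 1/2"
proof -
  show "0 \<le> K * (4 * t / (1 - t)\<^sup>2)"
    using assms by simp
  have "(1/2)\<^sup>2 \<le> (1 - t)\<^sup>2"
    by (rule power_mono) (use assms in auto)
  then have "16 * t * (1/2)\<^sup>2 \<le> 16 * t * (1 - t)\<^sup>2"
    using assms by (intro mult_left_mono) auto
  then have "4 * t / (1 - t)\<^sup>2 \<le> 16 * t"
    using assms by (simp add: divide_le_eq power2_eq_square)
  then have "K * (4 * t / (1 - t)\<^sup>2) \<le> K * (16 * t)"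
    using assms(1) by (rule mult_left_mono)
  then show "K * (4 * t / (1 - t)\<^sup>2) \<le> 1/2"
    using assms(4) by simp
qed

lemma quadratic_transform_coeff_diagonal:
  "(\<Sum>m\<le>n. A m * ((-4) ^ m * x ^ m * (pochhammer (a + 2 * of_nat m) (n - m) / fact (n - m) * x ^ (n - m))))
     = quadratic_transform_coeff A a n * x ^ n"
  unfolding quadratic_transform_coeff_def sum_distrib_right
proof (intro sum.cong refl)
  fix m assume "m \<in> {..n}"
  then have "x ^ m * x ^ (n - m) = x ^ n"
    by (simp flip: power_add)
  then show "A m * ((-4) ^ m * x ^ m * (pochhammer (a + 2 * of_nat m) (n - m) / fact (n - m) * x ^ (n - m)))
      = A m * (-4) ^ m * pochhammer (a + 2 * of_nat m) (n - m) / fact (n - m) * x ^ n"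
    by (simp add: mult_ac)
qed

lemma quadratic_transform:
  fixes A :: "nat \<Rightarrow> complex" and a x :: complex
  assumes A: "\<And>m. norm (A m) \<le> K ^ m" and "0 \<le> K"
    and x: "norm x < 1/2" "32 * K * norm x \<le> 1"
  shows "summable (\<lambda>m. A m * (-4 * x / (1 - x)\<^sup>2) ^ m)"
    and "summable (\<lambda>n. quadratic_transform_coeff A a n * x ^ n)"
    and "(\<Sum>m. A m * (-4 * x / (1 - x)\<^sup>2) ^ m)
           = (1 - x) powr a * (\<Sum>n. quadratic_transform_coeff A a n * x ^ n)"
proof -
  define t where "t = norm x"
  define E where "E = (1 - t) powr (- norm a)"
  define g where "g m p = pochhammer (a + 2 * of_nat m) p / fact p * x ^ p" for m p
  define F where "F m p = A m * ((-4) ^ m * x ^ m * g m p)" for m p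
  have x1: "norm x < 1"
    using x by simp
  have "x \<noteq> 1"
    using x by auto
  have t: "0 \<le> t" "t < 1/2" "32 * K * t \<le> 1"
    using x by (simp_all add: t_def)
  have norm_F: "norm (F m p) = norm (A m) * (4 ^ m * t ^ m) * norm (g m p)" for m p
    by (simp add: F_def t_def norm_mult norm_power)
  have rows: "summable (\<lambda>p. norm (F m p))" for m
    unfolding norm_F g_def using norm_quadratic_transform_row_le(1)[OF x1] by (rule summable_mult)
  have row_bound: "(\<Sum>p. norm (F m p)) \<le> E * (1/2) ^ m" for m
  proof -
    have "(\<Sum>p. norm (F m p)) = norm (A m) * (4 ^ m * t ^ m) * (\<Sum>p. norm (g m p))"
      unfolding norm_F g_def using norm_quadratic_transform_row_le(1)[OF x1] by (rule suminf_mult)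
    also have "\<dots> \<le> norm (A m) * (4 ^ m * t ^ m) * (E / ((1 - t)\<^sup>2) ^ m)"
      unfolding g_def E_def t_def using norm_quadratic_transform_row_le(2)[OF x1] by (intro mult_left_mono) auto
    also have "\<dots> = E * (norm (A m) * (4 * t / (1 - t)\<^sup>2) ^ m)"
      by (simp add: power_divide power_mult_distrib)
    also have "\<dots> \<le> E * (K ^ m * (4 * t / (1 - t)\<^sup>2) ^ m)"
      using t A[of m] by (intro mult_left_mono mult_right_mono) (auto simp: E_def)
    also have "\<dots> = E * (K * (4 * t / (1 - t)\<^sup>2)) ^ m"
      by (simp only: power_mult_distrib)
    also have "\<dots> \<le> E * (1/2) ^ m"
      using quadratic_ratio_le_half[OF \<open>0 \<le> K\<close> t] by (intro mult_left_mono power_mono) (auto simp: E_def)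
    finally show ?thesis .
  qed
  have "summable (\<lambda>m. E * (1/2) ^ m)"
    by (intro summable_mult summable_geometric) simp
  then have "summable (\<lambda>m. \<Sum>p. norm (F m p))"
    by (rule summable_comparison_test') (use row_bound rows in \<open>auto simp: suminf_nonneg\<close>)
  then obtain S where S_rows: "(\<lambda>m. \<Sum>p. F m p) sums S" and S_diag: "(\<lambda>n. \<Sum>m\<le>n. F m (n - m)) sums S"
    using sums_diagonal_reindex[of F] rows by blast
  have "(\<lambda>p. F m p) sums (A m * ((-4 * x / (1 - x)\<^sup>2) ^ m * (1 - x) powr (- a)))" for m
    unfolding F_def g_def by (intro sums_mult sums_quadratic_transform_row x1)
  with S_rows have "(\<lambda>m. A m * (-4 * x / (1 - x)\<^sup>2) ^ m * (1 - x) powr (- a)) sums S"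
    by (simp add: sums_iff mult.assoc)
  from sums_divide[OF this, of "(1 - x) powr (- a)"]
  have z_sums: "(\<lambda>m. A m * (-4 * x / (1 - x)\<^sup>2) ^ m) sums (S / (1 - x) powr (- a))"
    using \<open>x \<noteq> 1\<close> by simp
  have "(\<Sum>m\<le>n. F m (n - m)) = quadratic_transform_coeff A a n * x ^ n" for n
    unfolding F_def g_def by (rule quadratic_transform_coeff_diagonal)
  with S_diag have x_sums: "(\<lambda>n. quadratic_transform_coeff A a n * x ^ n) sums S"
    by simp
  from z_sums x_sums \<open>x \<noteq> 1\<close>
  show "summable (\<lambda>m. A m * (-4 * x / (1 - x)\<^sup>2) ^ m)"
    and "summable (\<lambda>n. quadratic_transform_coeff A a n * x ^ n)"
    and "(\<Sum>m. A m * (-4 * x / (1 - x)\<^sup>2) ^ m) = (1 - x) powr a * (\<Sum>n. quadratic_transform_coeff A a n * x ^ n)"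
    by (simp_all add: sums_iff powr_minus divide_inverse)
qed

theorem theorem4:
  fixes k :: nat and a b c d :: complex
  assumes "\<forall>m::nat. b \<noteq> - of_nat m" and "\<forall>m::nat. c \<noteq> - of_nat m"
      and "\<forall>m::nat. d \<noteq> - of_nat m"
      and "\<forall>m::nat. 1 + a - b \<noteq> - of_nat m" and "\<forall>m::nat. 1 + a - c \<noteq> - of_nat m"
  shows "\<exists>r>0. \<forall>x::complex. norm x < r \<longrightarrow>
    (let as = [a/2, 1/2 + a/2, 1 - of_nat k + a - b - c, of_nat k + d];
         bs = [1 + a - b, 1 + a - c, d];
         z = - 4 * x / (1 - x)^2;
         t = (\<lambda>n. pochhammer a n * pochhammer b n * pochhammer c n
                  / (fact n * pochhammer (1 + a - b) n * pochhammer (1 + a - c) n)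
                  * Q2 k (of_nat n) a b c d * x ^ n)
     in summable (hyp_term as bs z) \<and> summable t \<and>
        hypergeom as bs z = (1 - x) powr a * (\<Sum>n. t n))"
proof -
  define as where "as = [a/2, 1/2 + a/2, 1 - of_nat k + a - b - c, of_nat k + d]"
  define bs where "bs = [1 + a - b, 1 + a - c, d]"
  define t where "t x n = pochhammer a n * pochhammer b n * pochhammer c n
      / (fact n * pochhammer (1 + a - b) n * pochhammer (1 + a - c) n) * Q2 k (of_nat n) a b c d * x ^ n"
    for x :: complex and n
  obtain K where K: "K > 0" "\<And>n. norm (hyp_coeff as bs n) \<le> K ^ n"
    using hyp_coeff_geometric_bound[of as bs] assms(3-5) by (auto simp: as_def bs_def)
  have coeff: "t x = (\<lambda>n. quadratic_transform_coeff (hyp_coeff as bs) a n * x ^ n)" for x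
    using quadratic_transform_coeff_Q2[of b c d a k] assms
    by (simp add: fun_eq_iff as_def bs_def t_def pochhammer_eq_0_iff)
  define r where "r = min (1/2) (1 / (32 * K))"
  have "summable (hyp_term as bs (- 4 * x / (1 - x)\<^sup>2)) \<and> summable (t x)
      \<and> hypergeom as bs (- 4 * x / (1 - x)\<^sup>2) = (1 - x) powr a * (\<Sum>n. t x n)" if "norm x < r" for x
  proof -
    have "norm x < 1/2" "32 * K * norm x \<le> 1"
      using that K(1) by (simp_all add: r_def field_simps)
    from quadratic_transform[OF K(2) less_imp_le[OF K(1)] this]
    show ?thesis
      by (simp only: hypergeom_def hyp_term_eq coeff)
  qed
  moreover have "r > 0"
    using K(1) by (simp add: r_def)
  ultimately show ?thesis
    unfolding Let_def as_def[symmetric] bs_def[symmetric] t_def[symmetric] by blast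
qed

end
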